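(* Let $n\ge 3$, $1\le k\le n/2$, and let $F_1$ be a Minkowski norm on $\mathbb{R}^n$ invariant under the standard block diagonal action of $SO(k)\times SO(n-k)$, with Hessian metric $g_1$ and $E_1=\tfrac12F_1^2$. Let $V'=\mathrm{span}(e_1,\dots,e_k)$, $V''=\mathrm{span}(e_{k+1},\dots,e_n)$, and define $f(t)=E_1(\cos t\, e_1+\sin t\, e_{k+1})$ for $t\in\mathbb{R}$. Let $y=y_1e_1+y_{k+1}e_{k+1}\ne0$ with $y_1\ge0$, $y_{k+1}\ge 0$. Consider the conditions: (1) there exist $v'\in V'$, $v''\in V''$ with $g_1|_y(v',v'')\neq 0$; (2) $g_1|_y(e_1,e_{k+1})\ne 0$; (3) $y_{k+1}>0$, additionally $y_1>0$ when $k>1$, and the angle $t\in(0,\pi)$ with $y_1=|y|\cos t$, $y_{k+1}=|y|\sin t$ satisfies $-\cos t\sin t\, f''(t)+(\cos^2t-\sin^2t)f'(t)\ne 0$. Then (1) implies $y_{k+1}>0$ and, if $k>1$, $y_1>0$; and (1), (2), (3) are equivalent. Furthermore, if (1) holds then $F_1$ is not Euclidean on any conic open neighborhood of $y$ (i.e. does not coincide there with the square root of a positive definite quadratic form).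
   Context: A Minkowski norm on $\mathbb{R}^n$ is a continuous function $F:\mathbb{R}^n\to\mathbb{R}_{\ge 0}$, smooth and positive on $\mathbb{R}^n\setminus\{0\}$, positively $1$-homogeneous, such that the Hessian of $E=\tfrac12F^2$ is positive definite on $\mathbb{R}^n\setminus\{0\}$; its Hessian metric is $g=\mathrm{d}^2E$. The standard block diagonal action is left multiplication by $\mathrm{diag}(A',A'')$, $A'\in SO(k)$, $A''\in SO(n-k)$. $|y|$ denotes the Euclidean norm; $e_i$ the standard basis vectors. *)

theory Defs
  imports "HOL-Analysis.Analysis"
begin

definition dir_deriv :: "'a::euclidean_space \<Rightarrow> ('a \<Rightarrow> real) \<Rightarrow> 'a \<Rightarrow> real" where
  "dir_deriv v h x = deriv (\<lambda>t. h (x + t *\<^sub>R v)) 0"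

fun iter_dd :: "'a::euclidean_space list \<Rightarrow> ('a \<Rightarrow> real) \<Rightarrow> 'a \<Rightarrow> real" where
  "iter_dd [] h = h"
| "iter_dd (v # vs) h = dir_deriv v (iter_dd vs h)"

definition smooth_on :: "'a::euclidean_space set \<Rightarrow> ('a \<Rightarrow> real) \<Rightarrow> bool" where
  "smooth_on U h \<longleftrightarrow>
     (\<forall>vs. continuous_on U (iter_dd vs h) \<and>
        (\<forall>v. \<forall>x\<in>U. (\<lambda>t. iter_dd vs h (x + t *\<^sub>R v)) differentiable (at 0)))"

definition energy :: "('a::euclidean_space \<Rightarrow> real) \<Rightarrow> 'a \<Rightarrow> real" where
  "energy F y = (F y)\<^sup>2 / 2"

definition hess_metric :: "('a::euclidean_space \<Rightarrow> real) \<Rightarrow> 'a \<Rightarrow> 'a \<Rightarrow> 'a \<Rightarrow> real" where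
  "hess_metric F y u v = dir_deriv u (dir_deriv v (energy F)) y"

definition minkowski_norm :: "('a::euclidean_space \<Rightarrow> real) \<Rightarrow> bool" where
  "minkowski_norm F \<longleftrightarrow>
     continuous_on UNIV F \<and> (\<forall>y. F y \<ge> 0) \<and>
     smooth_on (UNIV - {0}) F \<and> (\<forall>y. y \<noteq> 0 \<longrightarrow> F y > 0) \<and>
     (\<forall>y c. c > 0 \<longrightarrow> F (c *\<^sub>R y) = c * F y) \<and>
     (\<forall>y v. y \<noteq> 0 \<longrightarrow> v \<noteq> 0 \<longrightarrow> hess_metric F y v v > 0)"

text \<open>R^n = R^k x R^(n-k) with index type 'k + 'm; block diagonal matrix diag(A',A'').\<close>
definition blockdiag :: "real^'k^'k \<Rightarrow> real^'m^'m \<Rightarrow> real^('k::finite + 'm::finite)^('k + 'm)" where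
  "blockdiag A B = (\<chi> i j. case (i, j) of
        (Inl a, Inl b) \<Rightarrow> A $ a $ b
      | (Inr a, Inr b) \<Rightarrow> B $ a $ b
      | _ \<Rightarrow> 0)"

definition SO_invariant :: "(real^('k::finite + 'm::finite) \<Rightarrow> real) \<Rightarrow> bool" where
  "SO_invariant F \<longleftrightarrow>
     (\<forall>(A :: real^'k^'k) (B :: real^'m^'m) y.
        orthogonal_matrix A \<and> det A = 1 \<and> orthogonal_matrix B \<and> det B = 1 \<longrightarrow>
        F (blockdiag A B *v y) = F y)"

definition pos_conic :: "'a::real_vector set \<Rightarrow> bool" where
  "pos_conic U \<longleftrightarrow> (\<forall>z\<in>U. \<forall>c::real. c > 0 \<longrightarrow> c *\<^sub>R z \<in> U)"

definition euclidean_on :: "(real^'n::finite \<Rightarrow> real) \<Rightarrow> (real^'n) set \<Rightarrow> bool" where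
  "euclidean_on F U \<longleftrightarrow>
     (\<exists>Q :: real^'n^'n. transpose Q = Q \<and> (\<forall>z. z \<noteq> 0 \<longrightarrow> z \<bullet> (Q *v z) > 0) \<and>
        (\<forall>z\<in>U. F z = sqrt (z \<bullet> (Q *v z))))"

end

theory Submission
  imports Defs
begin

text \<open>
  The Hessian metric g of a Minkowski norm F is bilinear, homogeneous of degree 0, invariant
  under the linear isometries of F, and satisfies Euler's relations g_y(y,w) = g_y(w,y) = dE_y(w).
  Differentiating the invariance under the rotations of a coordinate plane (e_i,e_j) at the
  identity gives y_i g_y(e_j,w) = y_j g_y(e_i,w) for w orthogonal to that plane (and likewise in
  the second slot), and the half-turns kill every mixed entry g_y(e_a,e_b), e_a in V', e_b in V'',
  when y lies in one of the two blocks. Hence at y = y_1 e_1 + y_(k+1) e_(k+1) only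
  g_y(e_1,e_(k+1)) can survive, and only in the open quadrant. Along the unit circle P(t) of that
  plane f' = g(P,P') and f'' = g(P',P') - g(P,P), which gives the formula in (3). If F were
  Euclidean near y, g would be constant there, and the rotation identity at y and at a nearby
  point y + s e_b would force g(e_1,e_(k+1)) = 0.

  Since \<^const>\<open>smooth_on\<close> only provides directional derivatives, Frechet differentiability
  is first recovered from the continuity of the partial derivatives.
\<close>

section \<open>Differentiability from directional derivatives\<close>

lemma iter_dd_append: "iter_dd (vs @ [w]) h = iter_dd vs (dir_deriv w h)"
  by (induction vs) auto

lemma smooth_on_dir_deriv: "smooth_on U h \<Longrightarrow> smooth_on U (dir_deriv w h)"
  unfolding smooth_on_def by (metis iter_dd_append)

lemma has_derivative_compose_curve:
  assumes "(h has_derivative L) (at (P t))" and "(P has_vector_derivative V) (at t)"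
  shows "((\<lambda>s. h (P s)) has_real_derivative L V) (at t)"
proof -
  have "((h \<circ> P) has_derivative (L \<circ> (\<lambda>s. s *\<^sub>R V))) (at t)"
    using diff_chain_at[of P "\<lambda>s. s *\<^sub>R V" t h L] assms by (simp add: has_vector_derivative_def)
  moreover have "L \<circ> (\<lambda>s. s *\<^sub>R V) = (*) (L V)"
    using linear_scale[OF has_derivative_linear[OF assms(1)]] by (auto simp: fun_eq_iff)
  ultimately show ?thesis by (simp add: has_field_derivative_def o_def)
qed

lemma has_derivative_along_line:
  assumes "(h has_derivative L) (at x)"
  shows "((\<lambda>t. h (x + t *\<^sub>R v)) has_real_derivative L v) (at 0)"
proof -
  have "((\<lambda>t. x + t *\<^sub>R v) has_vector_derivative v) (at 0)"
    by (auto intro!: derivative_eq_intros simp: has_vector_derivative_def)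
  with assms show ?thesis
    by (intro has_derivative_compose_curve[of h L "\<lambda>t. x + t *\<^sub>R v"]) simp_all
qed

lemma dir_deriv_eq_derivative:
  assumes "(h has_derivative L) (at x)"
  shows "dir_deriv v h x = L v"
  unfolding dir_deriv_def using has_derivative_along_line[OF assms] by (rule DERIV_imp_deriv)

lemma dir_deriv_along_line:
  assumes "(\<lambda>s. h (x + t *\<^sub>R v + s *\<^sub>R v)) differentiable (at 0)"
  shows "((\<lambda>s. h (x + s *\<^sub>R v)) has_real_derivative dir_deriv v h (x + t *\<^sub>R v)) (at t)"
proof -
  have "((\<lambda>s. h (x + t *\<^sub>R v + s *\<^sub>R v)) has_real_derivative dir_deriv v h (x + t *\<^sub>R v)) (at (t + -t))"
    using assms by (simp add: dir_deriv_def DERIV_deriv_iff_real_differentiable)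
  then have "((\<lambda>s. h (x + t *\<^sub>R v + (s + -t) *\<^sub>R v)) has_real_derivative dir_deriv v h (x + t *\<^sub>R v)) (at t)"
    by (subst (asm) DERIV_shift)
  then show ?thesis
    by (simp add: algebra_simps)
qed

lemma line_increment_bound:
  assumes line: "\<And>s. s \<in> closed_segment 0 a \<Longrightarrow> (\<lambda>\<tau>. h (p + s *\<^sub>R v + \<tau> *\<^sub>R v)) differentiable (at 0)"
    and bound: "\<And>s. s \<in> closed_segment 0 a \<Longrightarrow> \<bar>dir_deriv v h (p + s *\<^sub>R v) - d\<bar> \<le> c"
  shows "\<bar>h (p + a *\<^sub>R v) - h p - a * d\<bar> \<le> c * \<bar>a\<bar>"
proof -
  define g where "g s = h (p + s *\<^sub>R v) - s * d" for s
  have deriv: "(g has_field_derivative dir_deriv v h (p + s *\<^sub>R v) - d) (at s within closed_segment 0 a)"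
    if "s \<in> closed_segment 0 a" for s
    unfolding g_def using has_field_derivative_at_within[OF dir_deriv_along_line[OF line[OF that]]]
    by (auto intro!: derivative_eq_intros)
  have "norm (g a - g 0) \<le> c * norm (a - 0)"
    by (rule field_differentiable_bound[OF convex_closed_segment deriv])
      (use bound ends_in_segment in auto)
  then show ?thesis by (simp add: g_def)
qed

lemma partial_sums_increment_bound:
  fixes h :: "real^'n \<Rightarrow> real"
  assumes line: "\<And>p v. dist p x < \<delta> \<Longrightarrow> (\<lambda>t. h (p + t *\<^sub>R v)) differentiable (at 0)"
    and close: "\<And>i p. dist p x < \<delta> \<Longrightarrow> \<bar>dir_deriv (axis i 1) h p - dir_deriv (axis i 1) h x\<bar> \<le> c"
    and v: "norm v < \<delta>" and "finite S"
  shows "\<bar>h (x + (\<Sum>j\<in>S. v$j *\<^sub>R axis j 1)) - h x - (\<Sum>j\<in>S. v$j * dir_deriv (axis j 1) h x)\<bar>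
    \<le> c * card S * norm v"
  using \<open>finite S\<close>
proof (induction S rule: finite_induct)
  case (insert i S)
  define p where "p = x + (\<Sum>j\<in>S. v$j *\<^sub>R axis j (1::real))"
  have near: "dist (p + s *\<^sub>R axis i 1) x < \<delta>" if "s \<in> closed_segment 0 (v$i)" for s
  proof -
    have "\<bar>s\<bar> \<le> \<bar>v$i\<bar>"
      using that by (auto simp: closed_segment_eq_real_ivl split: if_splits)
    then have "norm (p + s *\<^sub>R axis i 1 - x) \<le> norm v"
      unfolding p_def using insert.hyps
      by (intro norm_le_componentwise_cart) (auto simp: axis_def if_distrib cong: if_cong)
    with v show ?thesis by (simp add: dist_norm)
  qed
  have "\<bar>h (p + v$i *\<^sub>R axis i 1) - h p - v$i * dir_deriv (axis i 1) h x\<bar> \<le> c * \<bar>v$i\<bar>"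
    by (rule line_increment_bound) (use line close near in auto)
  also have "\<dots> \<le> c * norm v"
    using component_le_norm_cart[of v i] close[of x i] v norm_ge_zero[of v]
    by (intro mult_left_mono) auto
  finally show ?case
    using insert.IH insert.hyps unfolding p_def by (simp add: algebra_simps)
qed simp

lemma has_derivative_continuous_partials:
  fixes h :: "real^'n \<Rightarrow> real"
  assumes U: "open U" "x \<in> U"
    and line: "\<And>p v. p \<in> U \<Longrightarrow> (\<lambda>t. h (p + t *\<^sub>R v)) differentiable (at 0)"
    and cont: "\<And>i. continuous_on U (dir_deriv (axis i 1) h)"
  shows "(h has_derivative (\<lambda>v. \<Sum>i\<in>UNIV. v$i * dir_deriv (axis i 1) h x)) (at x)"
proof -
  define D where "D i = dir_deriv (axis i (1::real)) h" for i
  have "\<exists>\<delta>>0. \<forall>y. norm (y - x) < \<delta> \<longrightarrow>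
      norm (h y - h x - (\<Sum>i\<in>UNIV. (y - x)$i * D i x)) \<le> e * norm (y - x)" if "e > 0" for e
  proof -
    define c where "c = e / CARD('n)"
    have "c > 0" using \<open>e > 0\<close> by (simp add: c_def)
    obtain r where r: "r > 0" "ball x r \<subseteq> U"
      using U open_contains_ball by blast
    have "\<forall>i. \<exists>d>0. \<forall>p\<in>U. dist p x < d \<longrightarrow> dist (D i p) (D i x) < c"
      using cont U \<open>c > 0\<close> unfolding D_def continuous_on_iff by blast
    then obtain d where d: "\<And>i. d i > 0" "\<And>i p. p \<in> U \<Longrightarrow> dist p x < d i \<Longrightarrow> dist (D i p) (D i x) < c"
      by metis
    define \<delta> where "\<delta> = min r (Min (range d))"
    have "\<delta> > 0" using d(1) r(1) by (simp add: \<delta>_def)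
    have inU: "p \<in> U" if "dist p x < \<delta>" for p
      using that r(2) by (auto simp: \<delta>_def dist_commute)
    have close: "\<bar>D i p - D i x\<bar> \<le> c" if "dist p x < \<delta>" for i p
      using d(2)[OF inU[OF that], of i] that by (auto simp: \<delta>_def dist_real_def)
    show ?thesis
    proof (intro exI[of _ \<delta>] conjI allI impI \<open>\<delta> > 0\<close>)
      fix y :: "real^'n" assume "norm (y - x) < \<delta>"
      from partial_sums_increment_bound[of x \<delta> h c "y - x" UNIV, OF line[OF inU] close[unfolded D_def] this]
      show "norm (h y - h x - (\<Sum>i\<in>UNIV. (y - x)$i * D i x)) \<le> e * norm (y - x)"
        using basis_expansion[of "y - x"] by (simp add: c_def D_def scalar_mult_eq_scaleR)
    qed
  qed
  moreover have "bounded_linear (\<lambda>v. \<Sum>i\<in>UNIV. v$i * D i x)"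
    by (intro bounded_linear_sum bounded_linear_mult_left[THEN bounded_linear_compose]
        bounded_linear_vec_nth)
  ultimately show ?thesis
    unfolding has_derivative_within_alt D_def by simp
qed

lemma smooth_on_has_derivative:
  fixes h :: "real^'n \<Rightarrow> real"
  assumes "smooth_on U h" "open U" "x \<in> U"
  shows "(h has_derivative (\<lambda>v. dir_deriv v h x)) (at x)"
proof -
  have "(h has_derivative (\<lambda>v. \<Sum>i\<in>UNIV. v$i * dir_deriv (axis i 1) h x)) (at x)"
    using assms(1) by (intro has_derivative_continuous_partials[OF assms(2,3)])
      (auto simp: smooth_on_def dest: spec[of _ "[]"] spec[of _ "[axis _ 1]"])
  moreover from dir_deriv_eq_derivative[OF this]
  have "(\<lambda>v. dir_deriv v h x) = (\<lambda>v. \<Sum>i\<in>UNIV. v$i * dir_deriv (axis i 1) h x)" ..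
  ultimately show ?thesis by simp
qed

lemma dir_deriv_homogeneous:
  assumes "\<And>r. r > 0 \<Longrightarrow> h (r *\<^sub>R p) = r ^ k * h p"
  shows "dir_deriv p h p = k * h p"
proof -
  have "eventually (\<lambda>s. s \<in> {-1<..}) (nhds (0::real))"
    by (rule eventually_nhds_in_open) auto
  then have ev: "eventually (\<lambda>s. h (p + s *\<^sub>R p) = (1 + s) ^ k * h p) (nhds 0)"
    by eventually_elim (use assms[of "1 + _"] in \<open>simp add: algebra_simps\<close>)
  have "((\<lambda>s. (1 + s) ^ k * h p) has_real_derivative k * h p) (at 0)"
    by (auto intro!: derivative_eq_intros)
  then have "((\<lambda>s. h (p + s *\<^sub>R p)) has_real_derivative k * h p) (at 0)"
    using DERIV_cong_ev[OF refl ev refl] by simp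
  then show ?thesis
    unfolding dir_deriv_def by (rule DERIV_imp_deriv)
qed

lemma open_nonzero: "open (UNIV - {0::'a::{t1_space,zero}})"
  by (simp add: open_Diff)

section \<open>Linear algebra and invariance of the Hessian metric\<close>

lemma linear_axis_expansion:
  fixes f :: "real^'n \<Rightarrow> real"
  assumes "linear f"
  shows "f u = (\<Sum>l\<in>UNIV. u$l * f (axis l 1))"
proof -
  have "f u = f (\<Sum>l\<in>UNIV. u$l *\<^sub>R axis l 1)"
    using basis_expansion[of u] by (simp add: scalar_mult_eq_scaleR)
  also have "\<dots> = (\<Sum>l\<in>UNIV. u$l * f (axis l 1))"
    by (simp add: linear_sum[OF assms] linear_scale[OF assms])
  finally show ?thesis .
qed

lemma bilinear_eq_0_span:
  assumes "bilinear h" and "\<And>a b. a \<in> A \<Longrightarrow> b \<in> B \<Longrightarrow> h a b = 0"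
    and "x \<in> span A" and "y \<in> span B"
  shows "h x y = 0"
proof -
  have "bilinear (\<lambda>_ _. 0 :: 'c::real_vector)"
    by (simp add: bilinear_def linear_zero)
  then show ?thesis
    using bilinear_eq[OF assms(1) _ order_refl order_refl assms(3,4)] assms(2) by blast
qed

lemma dir_deriv_energy_invariant:
  assumes "linear T" and "\<And>z. F (T z) = F z"
  shows "dir_deriv (T w) (energy F) (T p) = dir_deriv w (energy F) p"
proof -
  have "T p + s *\<^sub>R T w = T (p + s *\<^sub>R w)" for s
    using assms(1) by (simp add: linear_add linear_scale)
  then show ?thesis
    unfolding dir_deriv_def energy_def by (simp add: assms(2))
qed

lemma hess_metric_invariant:
  assumes "linear T" and "\<And>z. F (T z) = F z"
  shows "hess_metric F (T z) (T u) (T w) = hess_metric F z u w"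
proof -
  have "T z + s *\<^sub>R T u = T (z + s *\<^sub>R u)" for s
    using assms(1) by (simp add: linear_add linear_scale)
  then show ?thesis
    unfolding hess_metric_def dir_deriv_def[of "T u"] dir_deriv_def[of u]
    by (simp add: dir_deriv_energy_invariant[of T F, OF assms])
qed

lemma hess_metric_quadratic:
  fixes F :: "real^'n \<Rightarrow> real" and Q :: "real^'n^'n"
  assumes "open U" and "p \<in> U" and "transpose Q = Q"
    and quadratic: "\<And>q. q \<in> U \<Longrightarrow> energy F q = q \<bullet> (Q *v q) / 2"
  shows "hess_metric F p u w = w \<bullet> (Q *v u)"
proof -
  have sym: "a \<bullet> (Q *v b) = b \<bullet> (Q *v a)" for a b
    by (metis assms(3) dot_lmul_matrix inner_commute transpose_matrix_vector)
  have "dir_deriv w (energy F) q = w \<bullet> (Q *v q)" if "q \<in> U" for q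
  proof -
    have "((\<lambda>q. q \<bullet> (Q *v q) / 2) has_derivative (\<lambda>v. (v \<bullet> (Q *v q) + q \<bullet> (Q *v v)) / 2)) (at q)"
      by (auto intro!: derivative_eq_intros linear_imp_has_derivative matrix_vector_mul_linear)
    moreover have "(\<lambda>v. (v \<bullet> (Q *v q) + q \<bullet> (Q *v v)) / 2) = (\<lambda>v. v \<bullet> (Q *v q))"
      using sym[of q] by auto
    ultimately have "((\<lambda>q. q \<bullet> (Q *v q) / 2) has_derivative (\<lambda>v. v \<bullet> (Q *v q))) (at q)"
      by simp
    then have "(energy F has_derivative (\<lambda>v. v \<bullet> (Q *v q))) (at q)"
      by (rule has_derivative_transform_within_open[OF _ assms(1) that]) (use quadratic in auto)
    then show ?thesis by (rule dir_deriv_eq_derivative)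
  qed
  moreover have "((\<lambda>q. w \<bullet> (Q *v q)) has_derivative (\<lambda>u. w \<bullet> (Q *v u))) (at p)"
    by (intro linear_imp_has_derivative)
      (simp add: linear_iff matrix_vector_right_distrib inner_add_right matrix_vector_mult_scaleR)
  ultimately have "(dir_deriv w (energy F) has_derivative (\<lambda>u. w \<bullet> (Q *v u))) (at p)"
    using has_derivative_transform_within_open[OF _ assms(1,2)] by metis
  then show ?thesis
    unfolding hess_metric_def by (rule dir_deriv_eq_derivative)
qed

section \<open>Polar coordinates in a coordinate plane\<close>

lemma polar_coordinates_upper_half_plane:
  fixes x y :: real
  assumes "y > 0"
  shows "\<exists>t\<in>{0<..<pi}. x = sqrt (x\<^sup>2 + y\<^sup>2) * cos t \<and> y = sqrt (x\<^sup>2 + y\<^sup>2) * sin t"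
proof -
  define r where "r = sqrt (x\<^sup>2 + y\<^sup>2)"
  have "r > 0"
    unfolding r_def using assms by (intro real_sqrt_gt_zero add_nonneg_pos) auto
  moreover have "(x / r)\<^sup>2 + (y / r)\<^sup>2 = 1"
    using \<open>r > 0\<close> assms by (simp add: r_def power_divide add_divide_distrib[symmetric])
  ultimately obtain t where "0 \<le> t" "t \<le> pi" "x / r = cos t" "y / r = sin t"
    using sincos_total_pi[of "y / r" "x / r"] assms by auto
  moreover have "t \<noteq> 0" "t \<noteq> pi"
    using \<open>y / r = sin t\<close> \<open>r > 0\<close> assms by auto
  ultimately show ?thesis
    using \<open>r > 0\<close> unfolding r_def[symmetric] by (intro bexI[of _ t]) (auto simp: field_simps)
qed

lemma norm_axis_plane:
  assumes "i \<noteq> j"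
  shows "norm (a *\<^sub>R axis i 1 + b *\<^sub>R axis j 1 :: real^'n) = sqrt (a\<^sup>2 + b\<^sup>2)"
  using assms
  by (simp add: norm_eq_sqrt_inner inner_add_left inner_add_right inner_axis_axis power2_eq_square)

lemma axis_circle_nonzero:
  assumes "i \<noteq> j"
  shows "cos t *\<^sub>R axis i 1 + sin t *\<^sub>R axis j 1 \<noteq> (0 :: real^'n)"
proof
  assume "cos t *\<^sub>R axis i 1 + sin t *\<^sub>R axis j 1 = (0 :: real^'n)"
  then have "cos t = 0" "sin t = 0"
    using assms by (auto simp: vec_eq_iff axis_def dest: spec[of _ i] spec[of _ j])
  then show False
    using sin_cos_squared_add[of t] by simp
qed

lemma axis_plane_polar_coordinates:
  assumes "i \<noteq> j" and "y2 > 0"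
  shows "\<exists>t\<in>{0<..<pi}. y1 = norm (y1 *\<^sub>R axis i 1 + y2 *\<^sub>R axis j 1 :: real^'n) * cos t
    \<and> y2 = norm (y1 *\<^sub>R axis i 1 + y2 *\<^sub>R axis j 1 :: real^'n) * sin t"
  unfolding norm_axis_plane[OF assms(1)] by (rule polar_coordinates_upper_half_plane[OF assms(2)])

section \<open>The Hessian metric of a Minkowski norm\<close>

context
  fixes F :: "real^'n \<Rightarrow> real"
  assumes mink: "minkowski_norm F"
begin

lemma minkowski_norm_has_derivative:
  assumes "x \<noteq> 0"
  shows "(F has_derivative (\<lambda>v. dir_deriv v F x)) (at x)"
    and "(dir_deriv w F has_derivative (\<lambda>v. dir_deriv v (dir_deriv w F) x)) (at x)"
  using mink assms
  by (auto simp: minkowski_norm_def intro!: smooth_on_has_derivative[OF _ open_nonzero]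
      smooth_on_dir_deriv)

lemma dir_deriv_energy:
  assumes "x \<noteq> 0"
  shows "dir_deriv v (energy F) x = F x * dir_deriv v F x"
proof -
  have "(energy F has_derivative (\<lambda>v. F x * dir_deriv v F x)) (at x)"
    unfolding energy_def[abs_def]
    by (auto intro!: derivative_eq_intros minkowski_norm_has_derivative[OF assms])
  then show ?thesis by (rule dir_deriv_eq_derivative)
qed

lemma energy_has_derivative:
  assumes "x \<noteq> 0"
  shows "(energy F has_derivative (\<lambda>v. dir_deriv v (energy F) x)) (at x)"
proof -
  have "(energy F has_derivative (\<lambda>v. F x * dir_deriv v F x)) (at x)"
    unfolding energy_def[abs_def]
    by (auto intro!: derivative_eq_intros minkowski_norm_has_derivative[OF assms])
  then show ?thesis by (simp only: dir_deriv_energy[OF assms])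
qed

lemma linear_dir_deriv_energy:
  assumes "x \<noteq> 0"
  shows "linear (\<lambda>v. dir_deriv v (energy F) x)"
  using energy_has_derivative[OF assms] by (rule has_derivative_linear)

lemma dir_deriv_energy_has_derivative:
  assumes "x \<noteq> 0"
  shows "(dir_deriv w (energy F) has_derivative (\<lambda>u. hess_metric F x u w)) (at x)"
proof -
  have "((\<lambda>p. F p * dir_deriv w F p) has_derivative
      (\<lambda>u. F x * dir_deriv u (dir_deriv w F) x + dir_deriv u F x * dir_deriv w F x)) (at x)"
    by (auto intro!: derivative_eq_intros minkowski_norm_has_derivative[OF assms])
  then have d: "(dir_deriv w (energy F) has_derivative
      (\<lambda>u. F x * dir_deriv u (dir_deriv w F) x + dir_deriv u F x * dir_deriv w F x)) (at x)"
    by (rule has_derivative_transform_within_open[OF _ open_nonzero]) (use assms dir_deriv_energy in auto)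
  moreover have "(\<lambda>u. hess_metric F x u w)
      = (\<lambda>u. F x * dir_deriv u (dir_deriv w F) x + dir_deriv u F x * dir_deriv w F x)"
    unfolding hess_metric_def using dir_deriv_eq_derivative[OF d] ..
  ultimately show ?thesis by simp
qed

lemma bilinear_hess_metric:
  assumes "x \<noteq> 0"
  shows "bilinear (hess_metric F x)"
proof -
  have combination: "hess_metric F x u (a *\<^sub>R w + b *\<^sub>R w')
      = a * hess_metric F x u w + b * hess_metric F x u w'" for u a b w w'
  proof -
    have "((\<lambda>p. a * dir_deriv w (energy F) p + b * dir_deriv w' (energy F) p) has_derivative
        (\<lambda>u. a * hess_metric F x u w + b * hess_metric F x u w')) (at x)"
      by (auto intro!: derivative_eq_intros dir_deriv_energy_has_derivative[OF assms])
    then have "(dir_deriv (a *\<^sub>R w + b *\<^sub>R w') (energy F) has_derivative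
        (\<lambda>u. a * hess_metric F x u w + b * hess_metric F x u w')) (at x)"
      by (rule has_derivative_transform_within_open[OF _ open_nonzero])
        (use assms in \<open>auto simp: linear_add[OF linear_dir_deriv_energy] linear_scale[OF linear_dir_deriv_energy]\<close>)
    then show ?thesis
      unfolding hess_metric_def by (rule dir_deriv_eq_derivative)
  qed
  have "linear (hess_metric F x u)" for u
    by (rule linearI) (use combination[of _ 1 _ 1] combination[of _ _ _ 0] in simp_all)
  moreover have "linear (\<lambda>u. hess_metric F x u w)" for w
    using dir_deriv_energy_has_derivative[OF assms] by (rule has_derivative_linear)
  ultimately show ?thesis
    unfolding bilinear_def by blast
qed

lemma energy_scaleR:
  assumes "r > 0"
  shows "energy F (r *\<^sub>R x) = r\<^sup>2 * energy F x"
  using mink assms unfolding minkowski_norm_def energy_def by (simp add: power_mult_distrib)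

lemma dir_deriv_energy_scaleR:
  assumes "r > 0" and "p \<noteq> 0"
  shows "dir_deriv w (energy F) (r *\<^sub>R p) = r * dir_deriv w (energy F) p"
proof -
  have "((\<lambda>q. energy F (r *\<^sub>R q)) has_derivative (\<lambda>v. dir_deriv (r *\<^sub>R v) (energy F) (r *\<^sub>R p))) (at p)"
    using assms by (intro has_derivative_compose[OF _ energy_has_derivative]) (auto intro!: derivative_eq_intros)
  moreover have "((\<lambda>q. energy F (r *\<^sub>R q)) has_derivative (\<lambda>v. r\<^sup>2 * dir_deriv v (energy F) p)) (at p)"
    using assms by (simp add: energy_scaleR) (auto intro!: derivative_eq_intros energy_has_derivative)
  ultimately have "dir_deriv (r *\<^sub>R w) (energy F) (r *\<^sub>R p) = r\<^sup>2 * dir_deriv w (energy F) p"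
    by (rule has_derivative_unique[THEN fun_cong])
  then show ?thesis
    using assms linear_scale[OF linear_dir_deriv_energy, of "r *\<^sub>R p" r w]
    by (simp add: power2_eq_square)
qed

lemma hess_metric_scaleR:
  assumes "r > 0" and "z \<noteq> 0"
  shows "hess_metric F (r *\<^sub>R z) u w = hess_metric F z u w"
proof -
  have "((\<lambda>q. dir_deriv w (energy F) (r *\<^sub>R q)) has_derivative
      (\<lambda>u. hess_metric F (r *\<^sub>R z) (r *\<^sub>R u) w)) (at z)"
    using assms by (intro has_derivative_compose[OF _ dir_deriv_energy_has_derivative])
      (auto intro!: derivative_eq_intros)
  moreover have "((\<lambda>q. r * dir_deriv w (energy F) q) has_derivative (\<lambda>u. r * hess_metric F z u w)) (at z)"
    using assms by (auto intro!: derivative_eq_intros dir_deriv_energy_has_derivative)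
  then have "((\<lambda>q. dir_deriv w (energy F) (r *\<^sub>R q)) has_derivative (\<lambda>u. r * hess_metric F z u w)) (at z)"
    by (rule has_derivative_transform_within_open[OF _ open_nonzero])
      (use assms dir_deriv_energy_scaleR in auto)
  ultimately have "hess_metric F (r *\<^sub>R z) (r *\<^sub>R u) w = r * hess_metric F z u w"
    by (rule has_derivative_unique[THEN fun_cong])
  then show ?thesis
    using assms bilinear_lmul[OF bilinear_hess_metric, of "r *\<^sub>R z" r u w] by simp
qed

lemma dir_deriv_energy_Euler:
  "dir_deriv p (energy F) p = 2 * energy F p"
  using dir_deriv_homogeneous[of "energy F" p 2] energy_scaleR by simp

lemma hess_metric_Euler_left:
  assumes "z \<noteq> 0"
  shows "hess_metric F z z w = dir_deriv w (energy F) z"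
  unfolding hess_metric_def
  using dir_deriv_homogeneous[of "dir_deriv w (energy F)" z 1] dir_deriv_energy_scaleR assms by simp

lemma hess_metric_Euler_right:
  assumes "z \<noteq> 0"
  shows "hess_metric F z u z = dir_deriv u (energy F) z"
proof -
  define G where "G q = (\<Sum>l\<in>UNIV. q$l * dir_deriv (axis l 1) (energy F) q)" for q
  have G_eq: "G q = 2 * energy F q" if "q \<noteq> 0" for q
    using linear_axis_expansion[OF linear_dir_deriv_energy[OF that], of q]
    by (simp add: G_def dir_deriv_energy_Euler)
  have "linear (hess_metric F z u)" for u
    using bilinear_hess_metric[OF assms] by (simp add: bilinear_def)
  then have "(\<Sum>l\<in>UNIV. z$l * hess_metric F z u (axis l 1) + u$l * dir_deriv (axis l 1) (energy F) z)
      = dir_deriv u (energy F) z + hess_metric F z u z" for u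
    using linear_axis_expansion[OF linear_dir_deriv_energy[OF assms], of u]
      linear_axis_expansion[of "hess_metric F z u" z]
    by (simp add: sum.distrib mult.commute)
  moreover have "(G has_derivative (\<lambda>u. \<Sum>l\<in>UNIV. z$l * hess_metric F z u (axis l 1)
      + u$l * dir_deriv (axis l 1) (energy F) z)) (at z)"
    unfolding G_def
    by (auto intro!: derivative_eq_intros dir_deriv_energy_has_derivative[OF assms]
        bounded_linear_imp_has_derivative[OF bounded_linear_vec_nth])
  ultimately have "(G has_derivative (\<lambda>u. dir_deriv u (energy F) z + hess_metric F z u z)) (at z)"
    by simp
  then have "((\<lambda>q. 2 * energy F q) has_derivative
      (\<lambda>u. dir_deriv u (energy F) z + hess_metric F z u z)) (at z)"
    by (rule has_derivative_transform_within_open[OF _ open_nonzero]) (use assms G_eq in auto)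
  moreover have "((\<lambda>q. 2 * energy F q) has_derivative (\<lambda>u. 2 * dir_deriv u (energy F) z)) (at z)"
    by (auto intro!: derivative_eq_intros energy_has_derivative[OF assms])
  ultimately show ?thesis
    using has_derivative_unique[THEN fun_cong, of _ _ z _ u] by fastforce
qed

lemma hess_metric_symmetric_at_base_point:
  assumes "z \<noteq> 0"
  shows "hess_metric F z z w = hess_metric F z w z"
  using hess_metric_Euler_left[OF assms] hess_metric_Euler_right[OF assms] by simp

lemma energy_along_circle_derivatives:
  fixes u v :: "real^'n" and t :: real
  assumes circle: "\<And>\<tau>. cos \<tau> *\<^sub>R u + sin \<tau> *\<^sub>R v \<noteq> 0"
  defines "f \<equiv> \<lambda>\<tau>. energy F (cos \<tau> *\<^sub>R u + sin \<tau> *\<^sub>R v)"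
    and "P \<equiv> cos t *\<^sub>R u + sin t *\<^sub>R v" and "P' \<equiv> - sin t *\<^sub>R u + cos t *\<^sub>R v"
  shows "deriv f t = hess_metric F P P P'"
    and "deriv (deriv f) t = hess_metric F P P' P' - hess_metric F P P P"
proof -
  define \<gamma> where "\<gamma> \<tau> = cos \<tau> *\<^sub>R u + sin \<tau> *\<^sub>R v" for \<tau>
  define \<gamma>' where "\<gamma>' \<tau> = - sin \<tau> *\<^sub>R u + cos \<tau> *\<^sub>R v" for \<tau>
  have \<gamma>: "(\<gamma> has_vector_derivative \<gamma>' \<tau>) (at \<tau>)" for \<tau>
    unfolding \<gamma>_def \<gamma>'_def has_vector_derivative_def
    by (auto intro!: derivative_eq_intros simp: algebra_simps)
  have "(f has_real_derivative dir_deriv (\<gamma>' \<tau>) (energy F) (\<gamma> \<tau>)) (at \<tau>)" for \<tau>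
    unfolding f_def \<gamma>_def[symmetric]
    by (rule has_derivative_compose_curve[OF energy_has_derivative \<gamma>]) (simp add: \<gamma>_def circle)
  then have f': "deriv f \<tau> = dir_deriv (\<gamma>' \<tau>) (energy F) (\<gamma> \<tau>)" for \<tau>
    by (rule DERIV_imp_deriv)
  then show "deriv f t = hess_metric F P P P'"
    using hess_metric_Euler_left[OF circle] by (simp add: P_def P'_def \<gamma>_def \<gamma>'_def)
  have dE: "((\<lambda>\<tau>. dir_deriv w (energy F) (\<gamma> \<tau>)) has_real_derivative hess_metric F (\<gamma> \<tau>) (\<gamma>' \<tau>) w) (at \<tau>)"
    for w \<tau>
    by (rule has_derivative_compose_curve[OF dir_deriv_energy_has_derivative \<gamma>])
      (simp add: \<gamma>_def circle)
  have dE_combination: "dir_deriv (a *\<^sub>R u + b *\<^sub>R v) (energy F) (\<gamma> \<tau>)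
      = a * dir_deriv u (energy F) (\<gamma> \<tau>) + b * dir_deriv v (energy F) (\<gamma> \<tau>)" for a b \<tau>
  proof -
    interpret linear "\<lambda>w. dir_deriv w (energy F) (\<gamma> \<tau>)"
      unfolding \<gamma>_def by (rule linear_dir_deriv_energy[OF circle])
    show ?thesis by (simp add: add scale)
  qed
  have "deriv f = (\<lambda>\<tau>. - sin \<tau> * dir_deriv u (energy F) (\<gamma> \<tau>) + cos \<tau> * dir_deriv v (energy F) (\<gamma> \<tau>))"
    unfolding f' \<gamma>'_def dE_combination ..
  then have "(deriv f has_real_derivative
      - (cos t * dir_deriv u (energy F) P + sin t * dir_deriv v (energy F) P)
      + (- sin t * hess_metric F P P' u + cos t * hess_metric F P P' v)) (at t)"
    unfolding P_def P'_def \<gamma>_def[symmetric] \<gamma>'_def[symmetric]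
    by (auto intro!: derivative_eq_intros dE simp: algebra_simps)
  moreover have "cos t * dir_deriv u (energy F) P + sin t * dir_deriv v (energy F) P = hess_metric F P P P"
    using hess_metric_Euler_left[OF circle, of t] dE_combination[of "cos t" "sin t" t]
    unfolding P_def \<gamma>_def by simp
  moreover have "- sin t * hess_metric F P P' u + cos t * hess_metric F P P' v = hess_metric F P P' P'"
    using bilinear_hess_metric[OF circle, of t] unfolding P_def P'_def
    by (simp add: bilinear_radd bilinear_rsub bilinear_rmul)
  ultimately show "deriv (deriv f) t = hess_metric F P P' P' - hess_metric F P P P"
    using DERIV_imp_deriv by fastforce
qed

lemma hess_metric_polar:
  assumes circle: "\<And>\<tau>. cos \<tau> *\<^sub>R u + sin \<tau> *\<^sub>R v \<noteq> 0" and "sin t \<noteq> 0"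
  defines "f \<equiv> \<lambda>\<tau>. energy F (cos \<tau> *\<^sub>R u + sin \<tau> *\<^sub>R v)"
  shows "hess_metric F (cos t *\<^sub>R u + sin t *\<^sub>R v) u v
    = - cos t * sin t * deriv (deriv f) t + ((cos t)\<^sup>2 - (sin t)\<^sup>2) * deriv f t"
proof -
  define P where "P = cos t *\<^sub>R u + sin t *\<^sub>R v"
  define P' where "P' = - sin t *\<^sub>R u + cos t *\<^sub>R v"
  define H where "H = hess_metric F P"
  have b: "bilinear H"
    unfolding H_def P_def by (rule bilinear_hess_metric[OF circle])
  have "H P u = H u P"
    using hess_metric_symmetric_at_base_point[OF circle, of t u] by (simp add: H_def P_def)
  then have sym: "H v u = H u v"
    using \<open>sin t \<noteq> 0\<close> unfolding P_def
    by (simp add: bilinear_ladd[OF b] bilinear_radd[OF b] bilinear_lmul[OF b] bilinear_rmul[OF b])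
  note expand = bilinear_ladd[OF b] bilinear_radd[OF b] bilinear_lsub[OF b] bilinear_rsub[OF b]
    bilinear_lmul[OF b] bilinear_rmul[OF b] sym
  have "H P P' = - cos t * sin t * H u u + ((cos t)\<^sup>2 - (sin t)\<^sup>2) * H u v + cos t * sin t * H v v"
    unfolding P_def P'_def by (simp add: expand power2_eq_square algebra_simps)
  moreover have "H P' P' - H P P = ((sin t)\<^sup>2 - (cos t)\<^sup>2) * (H u u - H v v) - 4 * cos t * sin t * H u v"
    unfolding P_def P'_def by (simp add: expand power2_eq_square algebra_simps)
  moreover have "- c * s * (((s\<^sup>2 - c\<^sup>2) * (a - d) - 4 * c * s * b))
      + (c\<^sup>2 - s\<^sup>2) * (- c * s * a + (c\<^sup>2 - s\<^sup>2) * b + c * s * d) = b * (c\<^sup>2 + s\<^sup>2)\<^sup>2"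
    for a b c d s :: real
    by (simp add: power2_eq_square algebra_simps)
  ultimately show ?thesis
    using energy_along_circle_derivatives[OF circle, of t, folded f_def P_def P'_def H_def]
    by (simp add: H_def P_def)
qed

end

lemma hess_metric_axis_plane_polar:
  fixes F :: "real^'n \<Rightarrow> real" and i j :: 'n and y1 y2 :: real
  defines "y \<equiv> y1 *\<^sub>R axis i 1 + y2 *\<^sub>R axis j 1"
    and "f \<equiv> \<lambda>\<tau>. energy F (cos \<tau> *\<^sub>R axis i 1 + sin \<tau> *\<^sub>R axis j 1)"
  assumes "minkowski_norm F" and "i \<noteq> j" and "y \<noteq> 0" and "t \<in> {0<..<pi}"
    and "y1 = norm y * cos t" and "y2 = norm y * sin t"
  shows "hess_metric F y (axis i 1) (axis j 1)
    = - cos t * sin t * deriv (deriv f) t + ((cos t)\<^sup>2 - (sin t)\<^sup>2) * deriv f t"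
proof -
  note circle = axis_circle_nonzero[OF \<open>i \<noteq> j\<close>]
  have "norm y *\<^sub>R (cos t *\<^sub>R axis i 1 + sin t *\<^sub>R axis j 1) = y1 *\<^sub>R axis i 1 + y2 *\<^sub>R axis j 1"
    using assms(7,8) by (simp add: scaleR_add_right)
  then have "hess_metric F y (axis i 1) (axis j 1)
      = hess_metric F (cos t *\<^sub>R axis i 1 + sin t *\<^sub>R axis j 1) (axis i 1) (axis j 1)"
    using hess_metric_scaleR[OF assms(3) _ circle] \<open>y \<noteq> 0\<close> by (metis y_def zero_less_norm_iff)
  also have "\<dots> = - cos t * sin t * deriv (deriv f) t + ((cos t)\<^sup>2 - (sin t)\<^sup>2) * deriv f t"
    unfolding f_def using \<open>t \<in> {0<..<pi}\<close> sin_gt_zero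
    by (intro hess_metric_polar[OF assms(3) circle]) force
  finally show ?thesis .
qed

lemma hess_metric_axis_plane_nonzero_iff:
  fixes F :: "real^'n \<Rightarrow> real" and i j :: 'n and y1 y2 :: real
  defines "y \<equiv> y1 *\<^sub>R axis i 1 + y2 *\<^sub>R axis j 1"
    and "f \<equiv> \<lambda>\<tau>. energy F (cos \<tau> *\<^sub>R axis i 1 + sin \<tau> *\<^sub>R axis j 1)"
  assumes "minkowski_norm F" and "i \<noteq> j" and "y2 > 0"
  shows "hess_metric F y (axis i 1) (axis j 1) \<noteq> 0 \<longleftrightarrow>
    (\<exists>t\<in>{0<..<pi}. y1 = norm y * cos t \<and> y2 = norm y * sin t \<and>
       - cos t * sin t * deriv (deriv f) t + ((cos t)\<^sup>2 - (sin t)\<^sup>2) * deriv f t \<noteq> 0)"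
proof -
  have "y \<noteq> 0"
    using assms(4,5) by (auto simp: y_def vec_eq_iff axis_def dest: spec[of _ j])
  note polar = hess_metric_axis_plane_polar[OF assms(3,4) \<open>y \<noteq> 0\<close>[unfolded y_def],
      folded y_def f_def]
  show ?thesis
  proof
    assume "hess_metric F y (axis i 1) (axis j 1) \<noteq> 0"
    moreover obtain t where "t \<in> {0<..<pi}" "y1 = norm y * cos t" "y2 = norm y * sin t"
      using axis_plane_polar_coordinates[OF assms(4,5)] unfolding y_def by blast
    ultimately show "\<exists>t\<in>{0<..<pi}. y1 = norm y * cos t \<and> y2 = norm y * sin t \<and>
        - cos t * sin t * deriv (deriv f) t + ((cos t)\<^sup>2 - (sin t)\<^sup>2) * deriv f t \<noteq> 0"
      using polar by metis
  qed (use polar in metis)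
qed

section \<open>Rotations in coordinate planes\<close>

definition rot :: "'n::finite \<Rightarrow> 'n \<Rightarrow> real \<Rightarrow> real^'n^'n" where
  "rot i j \<theta> = (\<chi> p q. (if p = q then 1 else 0) + (if p = i \<and> q = i then cos \<theta> - 1 else 0)
    + (if p = j \<and> q = j then cos \<theta> - 1 else 0) + (if p = j \<and> q = i then sin \<theta> else 0)
    - (if p = i \<and> q = j then sin \<theta> else 0))"

lemma rot_mult_vec_nth:
  assumes "i \<noteq> j"
  shows "(rot i j \<theta> *v x) $ p = (if p = i then cos \<theta> * x$i - sin \<theta> * x$j
      else if p = j then sin \<theta> * x$i + cos \<theta> * x$j else x$p)"
proof -
  have "(rot i j \<theta> *v x) $ p = (\<Sum>q\<in>UNIV. (if q = i then rot i j \<theta> $ p $ i * x$i else 0)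
      + (if q = j then rot i j \<theta> $ p $ j * x$j else 0)
      + (if q = p \<and> p \<noteq> i \<and> p \<noteq> j then x$p else 0))"
    unfolding matrix_vector_mult_def using assms by (auto simp: rot_def intro!: sum.cong)
  then show ?thesis
    using assms by (simp add: sum.distrib rot_def)
qed

lemma rot_mult_vec:
  assumes "i \<noteq> j"
  shows "rot i j \<theta> *v x = x + ((cos \<theta> - 1) * x$i - sin \<theta> * x$j) *\<^sub>R axis i 1
      + (sin \<theta> * x$i + (cos \<theta> - 1) * x$j) *\<^sub>R axis j 1"
  using assms by (auto simp: vec_eq_iff rot_mult_vec_nth axis_def algebra_simps)

lemma transpose_rot: "transpose (rot i j \<theta>) = rot i j (- \<theta>)"
proof -
  have "transpose (rot i j \<theta>) $ p $ q = rot i j (- \<theta>) $ p $ q" for p q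
    by (cases "p = i"; cases "p = j"; cases "q = i"; cases "q = j") (simp_all add: transpose_def rot_def)
  then show ?thesis by (simp add: vec_eq_iff)
qed

lemma rot_mult_rot:
  assumes "i \<noteq> j"
  shows "rot i j \<alpha> ** rot i j \<beta> = rot i j (\<alpha> + \<beta>)"
proof -
  have "rot i j \<alpha> *v (rot i j \<beta> *v x) = rot i j (\<alpha> + \<beta>) *v x" for x
    using assms by (auto simp: vec_eq_iff rot_mult_vec_nth cos_add sin_add algebra_simps)
  then show ?thesis
    by (simp add: matrix_eq matrix_vector_mul_assoc)
qed

lemma rot_zero:
  assumes "i \<noteq> j"
  shows "rot i j 0 = mat 1"
  using assms by (simp add: matrix_eq vec_eq_iff rot_mult_vec_nth)

lemma orthogonal_matrix_rot:
  assumes "i \<noteq> j"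
  shows "orthogonal_matrix (rot i j \<theta>)"
  unfolding orthogonal_matrix_def transpose_rot rot_mult_rot[OF assms] by (simp add: rot_zero[OF assms])

lemma det_rot:
  assumes "i \<noteq> j"
  shows "det (rot i j \<theta>) = 1"
proof -
  have "det (rot i j \<theta>) = det (rot i j (\<theta>/2)) * det (rot i j (\<theta>/2))"
    using rot_mult_rot[OF assms, of "\<theta>/2" "\<theta>/2"] det_mul by (metis field_sum_of_halves)
  moreover have "det (rot i j (\<theta>/2)) = 1 \<or> det (rot i j (\<theta>/2)) = -1"
    by (rule det_orthogonal_matrix[OF orthogonal_matrix_rot[OF assms]])
  ultimately show ?thesis by auto
qed

lemma rot_has_vector_derivative:
  assumes "i \<noteq> j"
  shows "((\<lambda>\<theta>. rot i j \<theta> *v z) has_vector_derivative (z$i *\<^sub>R axis j 1 - z$j *\<^sub>R axis i 1)) (at 0)"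
  unfolding rot_mult_vec[OF assms] has_vector_derivative_def
  by (auto intro!: derivative_eq_intros simp: algebra_simps)

lemma blockdiag_rot_Inl: "blockdiag (rot a a' \<theta>) (mat 1) = rot (Inl a) (Inl a') \<theta>"
  by (auto simp: vec_eq_iff blockdiag_def rot_def mat_def split: sum.splits)

lemma blockdiag_rot_Inr: "blockdiag (mat 1) (rot b b' \<theta>) = rot (Inr b) (Inr b') \<theta>"
  by (auto simp: vec_eq_iff blockdiag_def rot_def mat_def split: sum.splits)

lemma SO_invariant_rot_Inl:
  assumes "SO_invariant F" and "a \<noteq> a'"
  shows "F (rot (Inl a) (Inl a') \<theta> *v z) = F z"
  using assms(1) unfolding SO_invariant_def blockdiag_rot_Inl[symmetric]
  using orthogonal_matrix_rot[OF assms(2)] det_rot[OF assms(2)] orthogonal_matrix_id det_I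
  by (metis (no_types))

lemma SO_invariant_rot_Inr:
  assumes "SO_invariant F" and "b \<noteq> b'"
  shows "F (rot (Inr b) (Inr b') \<theta> *v z) = F z"
  using assms(1) unfolding SO_invariant_def blockdiag_rot_Inr[symmetric]
  using orthogonal_matrix_rot[OF assms(2)] det_rot[OF assms(2)] orthogonal_matrix_id det_I
  by (metis (no_types))

section \<open>Infinitesimal rotation invariance\<close>

context
  fixes F :: "real^'n \<Rightarrow> real" and i j :: 'n
  assumes mink: "minkowski_norm F" and "i \<noteq> j"
    and rot_invariant: "\<And>\<theta> z. F (rot i j \<theta> *v z) = F z"
begin

lemma rot_invariant_dir_deriv_energy:
  assumes "z \<noteq> 0"
  shows "z$i * dir_deriv (axis j 1) (energy F) z = z$j * dir_deriv (axis i 1) (energy F) z"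
proof -
  let ?X = "z$i *\<^sub>R axis j 1 - z$j *\<^sub>R axis i (1::real)"
  have "((\<lambda>\<theta>. energy F (rot i j \<theta> *v z)) has_real_derivative dir_deriv ?X (energy F) z) (at 0)"
    by (rule has_derivative_compose_curve[where L = "\<lambda>v. dir_deriv v (energy F) z"])
      (simp_all add: rot_zero[OF \<open>i \<noteq> j\<close>] energy_has_derivative[OF mink assms]
        rot_has_vector_derivative[OF \<open>i \<noteq> j\<close>])
  moreover have "(\<lambda>\<theta>. energy F (rot i j \<theta> *v z)) = (\<lambda>\<theta>. energy F z)"
    using rot_invariant by (simp add: energy_def)
  ultimately have "dir_deriv ?X (energy F) z = 0"
    using DERIV_unique DERIV_const by metis
  moreover note lin = linear_dir_deriv_energy[OF mink assms]
  ultimately show ?thesis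
    by (simp add: linear_diff[OF lin] linear_scale[OF lin])
qed

lemma rot_invariant_hess_metric_left:
  assumes "z \<noteq> 0" and "w$i = 0" and "w$j = 0"
  shows "z$i * hess_metric F z (axis j 1) w = z$j * hess_metric F z (axis i 1) w"
proof -
  let ?X = "z$i *\<^sub>R axis j 1 - z$j *\<^sub>R axis i (1::real)"
  have "((\<lambda>\<theta>. dir_deriv w (energy F) (rot i j \<theta> *v z)) has_real_derivative hess_metric F z ?X w) (at 0)"
    by (rule has_derivative_compose_curve[where L = "\<lambda>u. hess_metric F z u w"])
      (simp_all add: rot_zero[OF \<open>i \<noteq> j\<close>] dir_deriv_energy_has_derivative[OF mink assms(1)]
        rot_has_vector_derivative[OF \<open>i \<noteq> j\<close>])
  moreover have "rot i j \<theta> *v w = w" for \<theta>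
    using assms \<open>i \<noteq> j\<close> by (simp add: rot_mult_vec)
  then have "(\<lambda>\<theta>. dir_deriv w (energy F) (rot i j \<theta> *v z)) = (\<lambda>\<theta>. dir_deriv w (energy F) z)"
    using dir_deriv_energy_invariant[of "(*v) (rot i j _)" F, OF matrix_vector_mul_linear rot_invariant]
    by metis
  ultimately have "hess_metric F z ?X w = 0"
    using DERIV_unique DERIV_const by metis
  then show ?thesis
    using bilinear_hess_metric[OF mink assms(1)] by (simp add: bilinear_lsub bilinear_lmul)
qed

lemma rot_invariant_hess_metric_right:
  assumes "z \<noteq> 0" and "u$i = 0" and "u$j = 0"
  shows "z$i * hess_metric F z u (axis j 1) = z$j * hess_metric F z u (axis i 1)"
proof -
  define \<Phi> where "\<Phi> s = z$i * dir_deriv (axis j 1) (energy F) (z + s *\<^sub>R u)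
      - z$j * dir_deriv (axis i 1) (energy F) (z + s *\<^sub>R u)" for s
  have "\<Phi> s = 0" for s
  proof (cases "z + s *\<^sub>R u = 0")
    case True
    then have "z$i = 0" "z$j = 0"
      using assms(2,3) by (metis add.right_neutral scaleR_zero_right vector_add_component
          vector_scaleR_component zero_index)+
    then show ?thesis by (simp add: \<Phi>_def)
  next
    case False
    then show ?thesis
      using rot_invariant_dir_deriv_energy[OF False] assms(2,3) by (simp add: \<Phi>_def)
  qed
  then have "\<Phi> = (\<lambda>_. 0)" ..
  then have "(\<Phi> has_real_derivative 0) (at 0)"
    by simp
  moreover have "(\<Phi> has_real_derivative
      z$i * hess_metric F z u (axis j 1) - z$j * hess_metric F z u (axis i 1)) (at 0)"
    unfolding \<Phi>_def
    by (auto intro!: derivative_eq_intros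
        has_derivative_along_line[OF dir_deriv_energy_has_derivative[OF mink assms(1)]])
  ultimately show ?thesis
    using DERIV_unique by fastforce
qed

lemma hess_metric_half_turn:
  assumes "y \<noteq> 0" and "y$i = 0" and "y$j = 0" and "u$i = 0" and "u$j = 0"
  shows "hess_metric F y u (axis i 1) = 0" and "hess_metric F y (axis i 1) u = 0"
proof -
  let ?T = "(*v) (rot i j pi)"
  have T: "?T y = y" "?T u = u" "?T (axis i 1) = - axis i 1"
    using assms \<open>i \<noteq> j\<close> by (auto simp: vec_eq_iff rot_mult_vec_nth axis_def)
  have "hess_metric F y u (axis i 1) = hess_metric F y u (- axis i 1)"
    and "hess_metric F y (axis i 1) u = hess_metric F y (- axis i 1) u"
    using hess_metric_invariant[of ?T F, OF matrix_vector_mul_linear rot_invariant] T by metis+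
  then show "hess_metric F y u (axis i 1) = 0" and "hess_metric F y (axis i 1) u = 0"
    using bilinear_hess_metric[OF mink assms(1)] by (simp_all add: bilinear_rneg bilinear_lneg)
qed

end

section \<open>Norms invariant under SO(k) x SO(n-k)\<close>

context
  fixes F :: "real^('k::finite + 'm::finite) \<Rightarrow> real"
  assumes mink: "minkowski_norm F" and inv: "SO_invariant F"
begin

lemma mixed_hess_metric_eq_0_if_Inr_part_zero:
  assumes "CARD('m) \<ge> 2" and "y \<noteq> 0" and "\<And>b. y $ Inr b = 0"
  shows "hess_metric F y (axis (Inl a) 1) (axis (Inr b) 1) = 0"
proof -
  obtain b' :: 'm where "b' \<noteq> b"
    using assms(1) by (metis card_2_iff' ex_card)
  then show ?thesis
    using hess_metric_half_turn(1)[OF mink _ SO_invariant_rot_Inr[OF inv], of b b' y "axis (Inl a) 1"] assms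
    by (simp add: axis_def)
qed

lemma mixed_hess_metric_eq_0_if_Inl_part_zero:
  assumes "CARD('k) \<ge> 2" and "y \<noteq> 0" and "\<And>a. y $ Inl a = 0"
  shows "hess_metric F y (axis (Inl a) 1) (axis (Inr b) 1) = 0"
proof -
  obtain a' :: 'k where "a' \<noteq> a"
    using assms(1) by (metis card_2_iff' ex_card)
  then show ?thesis
    using hess_metric_half_turn(2)[OF mink _ SO_invariant_rot_Inl[OF inv], of a a' y "axis (Inr b) 1"] assms
    by (simp add: axis_def)
qed

lemma mixed_hess_metric_eq_0_if_Inl_zero:
  assumes "y $ Inl a' \<noteq> 0" and "y $ Inl a = 0"
  shows "hess_metric F y (axis (Inl a) 1) (axis (Inr b) 1) = 0"
proof -
  have "a' \<noteq> a" "y \<noteq> 0"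
    using assms by auto
  then show ?thesis
    using rot_invariant_hess_metric_left[OF mink _ SO_invariant_rot_Inl[OF inv], of a' a y "axis (Inr b) 1"]
      assms by (simp add: axis_def)
qed

lemma mixed_hess_metric_eq_0_if_Inr_zero:
  assumes "y $ Inr b' \<noteq> 0" and "y $ Inr b = 0"
  shows "hess_metric F y (axis (Inl a) 1) (axis (Inr b) 1) = 0"
proof -
  have "b' \<noteq> b" "y \<noteq> 0"
    using assms by auto
  then show ?thesis
    using rot_invariant_hess_metric_right[OF mink _ SO_invariant_rot_Inr[OF inv], of b' b y "axis (Inl a) 1"]
      assms by (simp add: axis_def)
qed

lemma not_euclidean_on_if_mixed_hess_metric_nonzero:
  assumes "CARD('m) \<ge> 2" and "y $ Inr b0 \<noteq> 0" and "\<And>b. u $ Inr b = 0"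
    and "hess_metric F y u (axis (Inr b0) 1) \<noteq> 0" and "open U" and "y \<in> U"
  shows "\<not> euclidean_on F U"
proof
  assume "euclidean_on F U"
  then obtain Q :: "real^('k + 'm)^('k + 'm)" where "transpose Q = Q"
    and pos: "\<And>z. z \<noteq> 0 \<Longrightarrow> z \<bullet> (Q *v z) > 0" and F_eq: "\<And>z. z \<in> U \<Longrightarrow> F z = sqrt (z \<bullet> (Q *v z))"
    unfolding euclidean_on_def by blast
  have "energy F z = z \<bullet> (Q *v z) / 2" if "z \<in> U" for z
    using F_eq[OF that] pos[of z] by (cases "z = 0") (auto simp: energy_def)
  then have H: "hess_metric F z u w = w \<bullet> (Q *v u)" if "z \<in> U" for z w
    using hess_metric_quadratic[OF \<open>open U\<close> that \<open>transpose Q = Q\<close>] by blast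
  obtain b :: 'm where "b \<noteq> b0"
    using assms(1) by (metis card_2_iff' ex_card)
  obtain r where "r > 0" "ball y r \<subseteq> U"
    using assms(5,6) open_contains_ball by blast
  define z where "z = y + (r/2) *\<^sub>R axis (Inr b) 1"
  have "z \<in> U"
    using \<open>r > 0\<close> \<open>ball y r \<subseteq> U\<close> by (auto simp: z_def dist_norm)
  \<comment> \<open>On \<open>U\<close> the Hessian metric is the constant form \<open>Q\<close>, so comparing the rotation identity
    at \<open>y\<close> and at \<open>z\<close>, which differ only in the \<open>Inr b\<close> component, isolates \<open>Q(u, e\<^sub>b\<^sub>0)\<close>.\<close>
  have identity: "p $ Inr b0 * (axis (Inr b) 1 \<bullet> (Q *v u)) = p $ Inr b * (axis (Inr b0) 1 \<bullet> (Q *v u))"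
    if "p \<in> U" "p $ Inr b0 \<noteq> 0" for p
    using rot_invariant_hess_metric_right[OF mink _ SO_invariant_rot_Inr[OF inv], of b0 b p u] that
      \<open>b \<noteq> b0\<close> assms(3) H by force
  have "z $ Inr b0 = y $ Inr b0" "z $ Inr b = y $ Inr b + r/2"
    using \<open>b \<noteq> b0\<close> by (simp_all add: z_def axis_def)
  then have "axis (Inr b0) 1 \<bullet> (Q *v u) = 0"
    using identity[OF \<open>z \<in> U\<close>] identity[OF \<open>y \<in> U\<close>] assms(2) \<open>r > 0\<close> by (simp add: algebra_simps)
  then show False
    using assms(4) H[OF \<open>y \<in> U\<close>] by simp
qed

lemma mixed_basis_hess_metric_nonzero_on_quarter_plane:
  fixes a0 :: 'k and b0 :: 'm and y1 y2 :: real
  defines "y \<equiv> y1 *\<^sub>R axis (Inl a0) 1 + y2 *\<^sub>R axis (Inr b0) (1::real)"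
  assumes "CARD('m) \<ge> 2" and "y \<noteq> 0" and "y1 \<ge> 0" and "y2 \<ge> 0"
    and nonzero: "hess_metric F y (axis (Inl a) 1) (axis (Inr b) 1) \<noteq> 0"
  shows "y2 > 0" and "CARD('k) > 1 \<Longrightarrow> y1 > 0" and "a = a0" and "b = b0"
proof -
  have y_Inl: "y $ Inl a = (if a = a0 then y1 else 0)" and y_Inr: "y $ Inr b = (if b = b0 then y2 else 0)"
    for a b by (simp_all add: y_def axis_def)
  show "y2 > 0"
    using mixed_hess_metric_eq_0_if_Inr_part_zero[OF \<open>CARD('m) \<ge> 2\<close> \<open>y \<noteq> 0\<close>] nonzero \<open>y2 \<ge> 0\<close>
    by (force simp: y_Inr)
  show y1_pos: "y1 > 0" if "CARD('k) > 1"
    using mixed_hess_metric_eq_0_if_Inl_part_zero[OF _ \<open>y \<noteq> 0\<close>] that nonzero \<open>y1 \<ge> 0\<close>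
    by (force simp: y_Inl)
  show "a = a0"
  proof (rule ccontr)
    assume "a \<noteq> a0"
    then have "CARD('k) > 1"
      using card_mono[of UNIV "{a, a0}"] by simp
    then show False
      using mixed_hess_metric_eq_0_if_Inl_zero[of y a0 a b] y1_pos nonzero \<open>a \<noteq> a0\<close>
      by (simp add: y_Inl)
  qed
  show "b = b0"
  proof (rule ccontr)
    assume "b \<noteq> b0"
    then show False
      using mixed_hess_metric_eq_0_if_Inr_zero[of y b0 b a] \<open>y2 > 0\<close> nonzero by (simp add: y_Inr)
  qed
qed


lemma mixed_hess_metric_nonzero_on_quarter_plane:
  fixes a0 :: 'k and b0 :: 'm and y1 y2 :: real
  defines "y \<equiv> y1 *\<^sub>R axis (Inl a0) 1 + y2 *\<^sub>R axis (Inr b0) (1::real)"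
  assumes "CARD('m) \<ge> 2" and "y \<noteq> 0" and "y1 \<ge> 0" and "y2 \<ge> 0"
    and span: "v' \<in> span (range (\<lambda>a. axis (Inl a) 1))" "v'' \<in> span (range (\<lambda>b. axis (Inr b) 1))"
    and "hess_metric F y v' v'' \<noteq> 0"
  shows "y2 > 0" and "CARD('k) > 1 \<Longrightarrow> y1 > 0"
    and "hess_metric F y (axis (Inl a0) 1) (axis (Inr b0) 1) \<noteq> 0"
proof -
  obtain a b where nonzero: "hess_metric F y (axis (Inl a) 1) (axis (Inr b) 1) \<noteq> 0"
    using bilinear_eq_0_span[OF bilinear_hess_metric[OF mink \<open>y \<noteq> 0\<close>] _ span]
      \<open>hess_metric F y v' v'' \<noteq> 0\<close> by blast
  note quarter = mixed_basis_hess_metric_nonzero_on_quarter_plane[OF \<open>CARD('m) \<ge> 2\<close>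
      \<open>y \<noteq> 0\<close>[unfolded y_def] \<open>y1 \<ge> 0\<close> \<open>y2 \<ge> 0\<close> nonzero[unfolded y_def], folded y_def]
  show "y2 > 0" and "CARD('k) > 1 \<Longrightarrow> y1 > 0"
    by (fact quarter(1,2))+
  show "hess_metric F y (axis (Inl a0) 1) (axis (Inr b0) 1) \<noteq> 0"
    using nonzero unfolding quarter(3,4) .
qed
end

theorem lemma3p1:
  fixes F1 :: "real^('k::finite + 'm::finite) \<Rightarrow> real"
    and a0 :: 'k and b0 :: 'm and y1 y2 :: real
  assumes n3: "CARD('k) + CARD('m) \<ge> 3"
    and kle: "2 * CARD('k) \<le> CARD('k) + CARD('m)"
    and mink: "minkowski_norm F1"
    and inv: "SO_invariant F1"
    and ynz: "y1 *\<^sub>R axis (Inl a0) 1 + y2 *\<^sub>R axis (Inr b0) 1 \<noteq> 0"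
    and y1nn: "y1 \<ge> 0" and y2nn: "y2 \<ge> 0"
  shows
   "let e1 = axis (Inl a0) (1::real) :: real^('k + 'm);
        ek1 = axis (Inr b0) (1::real) :: real^('k + 'm);
        V' = span (range (\<lambda>a. axis (Inl a) (1::real))) :: (real^('k + 'm)) set;
        V'' = span (range (\<lambda>b. axis (Inr b) (1::real))) :: (real^('k + 'm)) set;
        f = (\<lambda>t. energy F1 (cos t *\<^sub>R e1 + sin t *\<^sub>R ek1));
        y = y1 *\<^sub>R e1 + y2 *\<^sub>R ek1;
        C1 = (\<exists>v'\<in>V'. \<exists>v''\<in>V''. hess_metric F1 y v' v'' \<noteq> 0);
        C2 = (hess_metric F1 y e1 ek1 \<noteq> 0);
        C3 = (y2 > 0 \<and> (CARD('k) > 1 \<longrightarrow> y1 > 0) \<and>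
              (\<exists>t\<in>{0<..<pi}. y1 = norm y * cos t \<and> y2 = norm y * sin t \<and>
                 - cos t * sin t * deriv (deriv f) t
                   + ((cos t)\<^sup>2 - (sin t)\<^sup>2) * deriv f t \<noteq> 0))
    in (C1 \<longrightarrow> y2 > 0 \<and> (CARD('k) > 1 \<longrightarrow> y1 > 0)) \<and>
       (C1 \<longleftrightarrow> C2) \<and> (C2 \<longleftrightarrow> C3) \<and>
       (C1 \<longrightarrow> \<not> (\<exists>U. open U \<and> y \<in> U \<and> pos_conic U \<and> euclidean_on F1 U))"
proof -
  define e1 :: "real^('k + 'm)" where "e1 = axis (Inl a0) 1"
  define ek1 :: "real^('k + 'm)" where "ek1 = axis (Inr b0) 1"
  define V' :: "(real^('k + 'm)) set" where "V' = span (range (\<lambda>a. axis (Inl a) 1))"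
  define V'' :: "(real^('k + 'm)) set" where "V'' = span (range (\<lambda>b. axis (Inr b) 1))"
  define f where "f = (\<lambda>t. energy F1 (cos t *\<^sub>R e1 + sin t *\<^sub>R ek1))"
  define y where "y = y1 *\<^sub>R e1 + y2 *\<^sub>R ek1"
  define C1 where "C1 = (\<exists>v'\<in>V'. \<exists>v''\<in>V''. hess_metric F1 y v' v'' \<noteq> 0)"
  define C2 where "C2 = (hess_metric F1 y e1 ek1 \<noteq> 0)"
  define quadrant where "quadrant = (y2 > 0 \<and> (CARD('k) > 1 \<longrightarrow> y1 > 0))"
  define NE where "NE = (\<not> (\<exists>U. open U \<and> y \<in> U \<and> pos_conic U \<and> euclidean_on F1 U))"
  define polar_nonzero where "polar_nonzero = (\<exists>t\<in>{0<..<pi}. y1 = norm y * cos t \<and> y2 = norm y * sin t \<and>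
    - cos t * sin t * deriv (deriv f) t + ((cos t)\<^sup>2 - (sin t)\<^sup>2) * deriv f t \<noteq> 0)"
  have "CARD('m) \<ge> 2"
    using n3 kle by linarith
  have "y1 \<noteq> 0 \<or> y2 \<noteq> 0"
    using ynz by auto
  then have "y \<noteq> 0"
    by (auto simp: y_def e1_def ek1_def vec_eq_iff axis_def)
  have C1_imp: "quadrant \<and> C2" if C1
    using that mixed_hess_metric_nonzero_on_quarter_plane[OF mink inv \<open>CARD('m) \<ge> 2\<close>
        \<open>y \<noteq> 0\<close>[unfolded y_def e1_def ek1_def] y1nn y2nn]
    unfolding C1_def C2_def quadrant_def V'_def V''_def y_def e1_def ek1_def by blast
  have "C2 \<Longrightarrow> C1"
    unfolding C1_def C2_def V'_def V''_def e1_def ek1_def by (blast intro: span_base)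
  moreover have "C2 \<longleftrightarrow> polar_nonzero" if quadrant
    using hess_metric_axis_plane_nonzero_iff[OF mink, of "Inl a0" "Inr b0" y2 y1] that
    unfolding C2_def polar_nonzero_def quadrant_def y_def f_def e1_def ek1_def by simp
  moreover have NE if C1
  proof -
    have "y $ Inr b0 \<noteq> 0" "\<And>b. e1 $ Inr b = 0" "hess_metric F1 y e1 (axis (Inr b0) 1) \<noteq> 0"
      using C1_imp[OF that] by (auto simp: quadrant_def C2_def y_def e1_def ek1_def axis_def)
    then show ?thesis
      using not_euclidean_on_if_mixed_hess_metric_nonzero[OF mink inv \<open>CARD('m) \<ge> 2\<close>]
      unfolding NE_def by blast
  qed
  ultimately have "(C1 \<longrightarrow> quadrant) \<and> (C1 \<longleftrightarrow> C2) \<and> (C2 \<longleftrightarrow> quadrant \<and> polar_nonzero)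
      \<and> (C1 \<longrightarrow> NE)"
    using C1_imp by blast
  then show ?thesis
    unfolding Let_def C1_def C2_def quadrant_def polar_nonzero_def NE_def V'_def V''_def f_def y_def
      e1_def ek1_def conj_assoc .
qed

end
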